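(* Let $n>k$ and let $\mathcal{S}$ be a set of $k$-spaces in $\mathrm{AG}(n,q)$ pairwise intersecting in a $(k-1)$-space such that $\mathcal{S}$ is not a $(k-1)$-pencil. Then $|\mathcal{S}|\leq\theta_k$, and equality holds if and only if there exist an affine $(k+1)$-space $\Gamma$ and $\mathcal{S}$ is a maximal set of $\theta_k$ affine $k$-spaces in $\Gamma$ such that $\tilde\sigma_1\cap H_\infty\neq\tilde\sigma_2\cap H_\infty$ for all distinct $\sigma_1,\sigma_2\in\mathcal{S}$. Moreover, all elements of $\mathcal{S}$ are contained in an affine $(k+1)$-space.
   Context: $\mathrm{AG}(n,q)$ is viewed as $\mathrm{PG}(n,q)$ minus a hyperplane $H_\infty$; for an affine subspace $\alpha$, $\tilde\alpha$ denotes its projective closure. Affine subspaces intersect in a $(k-1)$-space if their affine intersection is an affine $(k-1)$-space. $\theta_k=\frac{q^{k+1}-1}{q-1}$. A $(k-1)$-pencil is the set of all affine $k$-spaces containing a fixed affine $(k-1)$-space. *)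

theory Defs
  imports "HOL-Analysis.Analysis"
begin

text \<open>AG(n,q) is modelled as the vector space F^n (F a finite field with q = CARD(F)
elements, n = CARD('n)). The projective closure of an affine subspace meets the hyperplane at infinity
exactly in the projective space of its direction W, so the condition on the points at
infinity is expressed via the direction.\<close>

definition aff_space :: "nat \<Rightarrow> ('a::field ^ 'n) set \<Rightarrow> bool" where
  "aff_space k A \<longleftrightarrow> (\<exists>v W. vec.subspace W \<and> vec.dim W = k \<and> A = (\<lambda>w. v + w) ` W)"

definition aff_dir :: "('a::field ^ 'n) set \<Rightarrow> ('a ^ 'n) set" where
  "aff_dir A = {x - y | x y. x \<in> A \<and> y \<in> A}"

definition at_infinity :: "('a::field ^ 'n) set \<Rightarrow> ('a ^ 'n) set set" where
  "at_infinity A = {L. vec.subspace L \<and> vec.dim L = 1 \<and> L \<subseteq> aff_dir A}"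

definition theta :: "nat \<Rightarrow> nat \<Rightarrow> nat" where
  "theta q k = (q ^ (k + 1) - 1) div (q - 1)"

definition pencil :: "nat \<Rightarrow> ('a::field ^ 'n) set \<Rightarrow> ('a ^ 'n) set set" where
  "pencil k P = {\<sigma>. aff_space k \<sigma> \<and> P \<subseteq> \<sigma>}"

end

theory Submission
  imports Defs
begin

text \<open>Two members \<sigma>1, \<sigma>2 of S meet in a (k-1)-space P and together span a (k+1)-space \<Gamma>.
A member \<sigma> not contained in \<Gamma> meets \<Gamma> in a space of dimension less than k that contains the
(k-1)-spaces \<sigma> \<inter> \<sigma>1 and \<sigma> \<inter> \<sigma>2, so \<sigma> \<inter> \<Gamma> = P. As S is not the pencil through P, some member
\<sigma>3 misses P; then \<sigma>3 lies in \<Gamma>, and any member \<sigma> outside \<Gamma> would give \<sigma> \<inter> \<sigma>3 = P \<subseteq> \<sigma>3.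
So S lies in \<Gamma>. Members of S meet, so their directions are pairwise distinct k-dimensional
subspaces of the (k+1)-dimensional direction of \<Gamma>, of which there are at most theta q k; equality
means that every direction, i.e. every set of points at infinity, occurs.\<close>

lemma aff_dir_mono: "A \<subseteq> B \<Longrightarrow> aff_dir A \<subseteq> aff_dir B"
  unfolding aff_dir_def by blast

lemma aff_dir_coset:
  fixes D :: "('a::field ^ 'n) set"
  assumes "vec.subspace D"
  shows "aff_dir ((+) v ` D) = D"
proof
  show "aff_dir ((+) v ` D) \<subseteq> D"
    unfolding aff_dir_def using assms vec.subspace_diff by fastforce
  show "D \<subseteq> aff_dir ((+) v ` D)"
  proof
    fix w assume "w \<in> D"
    moreover have "v \<in> (+) v ` D"
      using assms vec.subspace_0 by force
    ultimately have "v + w \<in> (+) v ` D" "v \<in> (+) v ` D" "w = (v + w) - v"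
      by auto
    then show "w \<in> aff_dir ((+) v ` D)" unfolding aff_dir_def by blast
  qed
qed

lemma coset_recenter:
  fixes D :: "('a::field ^ 'n) set"
  assumes "vec.subspace D" "y \<in> (+) b ` D"
  shows "(+) b ` D = (+) y ` D"
proof -
  obtain d where d: "d \<in> D" "y = b + d" using assms(2) by blast
  have "(+) d ` D = D"
  proof
    show "(+) d ` D \<subseteq> D" using d(1) assms(1) vec.subspace_add by blast
    show "D \<subseteq> (+) d ` D"
    proof
      fix x assume "x \<in> D"
      then have "x = d + (x - d)" "x - d \<in> D" using d(1) assms(1) vec.subspace_diff by auto
      then show "x \<in> (+) d ` D" by blast
    qed
  qed
  then have "(+) y ` D = (+) b ` ((+) d ` D)"
    unfolding d(2) image_image by (simp add: add.assoc)
  then show ?thesis using \<open>(+) d ` D = D\<close> by simp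
qed

lemma aff_spaceI:
  fixes D :: "('a::field ^ 'n) set"
  assumes "vec.subspace D" "vec.dim D = k"
  shows "aff_space k ((+) x ` D)"
  using assms unfolding aff_space_def by blast

lemma aff_spaceD:
  fixes A :: "('a::field ^ 'n) set"
  assumes "aff_space k A"
  shows "vec.subspace (aff_dir A)" "vec.dim (aff_dir A) = k" "A \<noteq> {}"
    and "x \<in> A \<Longrightarrow> A = (+) x ` aff_dir A"
proof -
  obtain v W where W: "vec.subspace W" "vec.dim W = k" "A = (+) v ` W"
    using assms unfolding aff_space_def by blast
  moreover have "aff_dir A = W" using W aff_dir_coset by blast
  ultimately show "vec.subspace (aff_dir A)" "vec.dim (aff_dir A) = k" by simp_all
  show "A \<noteq> {}" using W vec.subspace_0 by blast
  show "x \<in> A \<Longrightarrow> A = (+) x ` aff_dir A"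
    using W \<open>aff_dir A = W\<close> coset_recenter by metis
qed

lemma aff_space_UNIV: "aff_space CARD('n) (UNIV :: ('a::field ^ 'n) set)"
  using aff_spaceI[OF vec.subspace_UNIV vec_dim_card, of 0] by simp

lemma aff_subspace_exists:
  fixes A :: "('a::field ^ 'n) set"
  assumes "aff_space k A" "j \<le> k"
  obtains P where "aff_space j P" "P \<subseteq> A"
proof -
  obtain x where x: "x \<in> A" using aff_spaceD(3)[OF assms(1)] by blast
  define D where "D = aff_dir A"
  have A: "A = (+) x ` D" unfolding D_def using aff_spaceD(4)[OF assms(1) x] .
  have "vec.span D = D" "j \<le> vec.dim D"
    unfolding D_def using aff_spaceD(1,2)[OF assms(1)] assms(2) vec.span_eq_iff by auto
  then obtain W where W: "vec.subspace W" "W \<subseteq> D" "vec.dim W = j"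
    using vec.choose_subspace_of_subspace[of j D] by metis
  have "(+) x ` W \<subseteq> A" unfolding A using W(2) by (rule image_mono)
  then show thesis using that aff_spaceI[OF W(1,3)] by blast
qed

lemma aff_space_Int:
  fixes A B :: "('a::field ^ 'n) set"
  assumes "aff_space k A" "aff_space m B" "x \<in> A \<inter> B"
  shows "A \<inter> B = (+) x ` (aff_dir A \<inter> aff_dir B)"
proof -
  have "A \<inter> B = (+) x ` aff_dir A \<inter> (+) x ` aff_dir B"
    using aff_spaceD(4)[OF assms(1)] aff_spaceD(4)[OF assms(2)] assms(3) by (metis IntD1 IntD2)
  then show ?thesis by auto
qed

lemma aff_space_subset_eq:
  fixes A B :: "('a::field ^ 'n) set"
  assumes "aff_space m A" "aff_space j B" "A \<subseteq> B" "j \<le> m"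
  shows "A = B"
proof -
  obtain x where x: "x \<in> A" using aff_spaceD(3)[OF assms(1)] by blast
  have "aff_dir A = aff_dir B"
    by (rule vec.subspace_dim_equal)
      (use aff_dir_mono[OF assms(3)] aff_spaceD(1,2)[OF assms(1)] aff_spaceD(1,2)[OF assms(2)]
        assms(4) in auto)
  then show ?thesis
    using aff_spaceD(4)[OF assms(1) x] aff_spaceD(4)[OF assms(2)] x assms(3) by (metis subsetD)
qed

lemma aff_space_eq_if_parallel:
  fixes A B :: "('a::field ^ 'n) set"
  assumes "aff_space k A" "aff_space m B" "A \<inter> B \<noteq> {}" "aff_dir A = aff_dir B"
  shows "A = B"
proof -
  obtain x where "x \<in> A" "x \<in> B" using assms(3) by blast
  then show ?thesis using aff_spaceD(4)[OF assms(1)] aff_spaceD(4)[OF assms(2)] assms(4) by metis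
qed

lemma aff_space_Int_not_subset:
  fixes A B :: "('a::field ^ 'n) set"
  assumes "aff_space k A" "aff_space m B" "x \<in> A \<inter> B" "\<not> A \<subseteq> B"
  obtains j where "j < k" "aff_space j (A \<inter> B)"
proof -
  define DA DB where "DA = aff_dir A" and "DB = aff_dir B"
  have A: "A = (+) x ` DA" and B: "B = (+) x ` DB"
    unfolding DA_def DB_def using aff_spaceD(4) assms(1-3) by blast+
  have DA: "vec.subspace DA" "vec.dim DA = k" and DB: "vec.subspace DB"
    unfolding DA_def DB_def using aff_spaceD(1,2) assms(1,2) by blast+
  have sub: "vec.subspace (DA \<inter> DB)" using DA(1) DB by (rule vec.subspace_inter)
  have "\<not> DA \<subseteq> DB" using assms(4) unfolding A B by blast
  then have "vec.span (DA \<inter> DB) \<subset> vec.span DA"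
    using sub DA(1) by (auto simp: vec.span_eq_iff[THEN iffD2])
  then have "vec.dim (DA \<inter> DB) < k" using vec.dim_psubset DA(2) by metis
  moreover have "A \<inter> B = (+) x ` (DA \<inter> DB)" unfolding A B by auto
  ultimately show thesis using that aff_spaceI[OF sub] by metis
qed

lemma aff_space_Int_eq_if_not_subset:
  fixes A B Q :: "('a::field ^ 'n) set"
  assumes "aff_space k A" "aff_space m B" "\<not> A \<subseteq> B" "aff_space (k - 1) Q" "Q \<subseteq> A \<inter> B"
  shows "A \<inter> B = Q"
proof -
  obtain x where "x \<in> A \<inter> B" using aff_spaceD(3)[OF assms(4)] assms(5) by blast
  then obtain j where "j < k" "aff_space j (A \<inter> B)"
    using aff_space_Int_not_subset assms(1-3) by metis
  then show ?thesis using aff_space_subset_eq[OF assms(4) _ assms(5)] by fastforce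
qed

lemma aff_space_join:
  fixes A B :: "('a::field ^ 'n) set"
  assumes "aff_space k A" "aff_space k B" "aff_space (k - 1) (A \<inter> B)" "1 \<le> k"
  obtains \<Gamma> where "aff_space (k + 1) \<Gamma>" "A \<subseteq> \<Gamma>" "B \<subseteq> \<Gamma>"
proof -
  obtain x where x: "x \<in> A \<inter> B" using aff_spaceD(3)[OF assms(3)] by blast
  define DA DB where "DA = aff_dir A" and "DB = aff_dir B"
  have A: "A = (+) x ` DA" and B: "B = (+) x ` DB"
    unfolding DA_def DB_def using aff_spaceD(4) assms(1,2) x by blast+
  have DA: "vec.subspace DA" "vec.dim DA = k" and DB: "vec.subspace DB" "vec.dim DB = k"
    unfolding DA_def DB_def using aff_spaceD(1,2) assms(1,2) by blast+
  have "A \<inter> B = (+) x ` (DA \<inter> DB)"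
    unfolding DA_def DB_def using aff_space_Int[OF assms(1,2) x] .
  then have "aff_dir (A \<inter> B) = DA \<inter> DB"
    using aff_dir_coset vec.subspace_inter[OF DA(1) DB(1)] by metis
  then have "vec.dim (DA \<inter> DB) = k - 1" using aff_spaceD(2)[OF assms(3)] by simp
  define U where "U = {a + b |a b. a \<in> DA \<and> b \<in> DB}"
  have "vec.subspace U" unfolding U_def using DA(1) DB(1) by (rule vec.subspace_sums)
  moreover have "vec.dim U = k + 1"
    using vec.dim_sums_Int[OF DA(1) DB(1)] \<open>vec.dim (DA \<inter> DB) = k - 1\<close> DA(2) DB(2) assms(4)
    unfolding U_def by simp
  moreover have "DA \<subseteq> U" "DB \<subseteq> U"
    unfolding U_def using DA(1) DB(1) vec.subspace_0 by force+
  ultimately show thesis using that[OF aff_spaceI] unfolding A B by blast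
qed

lemma subspace_subset_if_lines_subset:
  fixes D E :: "('a::field ^ 'n) set"
  assumes "vec.subspace D" "vec.subspace E"
    and lines: "{L. vec.subspace L \<and> vec.dim L = 1 \<and> L \<subseteq> D}
      \<subseteq> {L. vec.subspace L \<and> vec.dim L = 1 \<and> L \<subseteq> E}"
  shows "D \<subseteq> E"
proof
  fix w assume "w \<in> D"
  show "w \<in> E"
  proof (cases "w = 0")
    case True
    then show ?thesis using assms(2) vec.subspace_0 by blast
  next
    case False
    have "vec.span {w} \<subseteq> D" using \<open>w \<in> D\<close> assms(1) by (simp add: vec.span_minimal)
    then have "vec.span {w} \<in> {L. vec.subspace L \<and> vec.dim L = 1 \<and> L \<subseteq> D}"
      using False vec.subspace_span by simp
    then have "vec.span {w} \<subseteq> E" using lines by blast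
    then show ?thesis using vec.span_base by blast
  qed
qed

lemma at_infinity_eq_iff:
  fixes A B :: "('a::field ^ 'n) set"
  assumes "aff_space k A" "aff_space m B"
  shows "at_infinity A = at_infinity B \<longleftrightarrow> aff_dir A = aff_dir B"
proof
  assume "at_infinity A = at_infinity B"
  then show "aff_dir A = aff_dir B"
    unfolding at_infinity_def
    by (intro subset_antisym subspace_subset_if_lines_subset)
      (simp_all add: aff_spaceD(1)[OF assms(1)] aff_spaceD(1)[OF assms(2)])
qed (simp add: at_infinity_def)

lemma two_le_card_field: "2 \<le> CARD('a::{field,finite})"
  using card_mono[of UNIV "{0, 1 :: 'a}"] by simp

lemma theta_eq_geometric_sum:
  assumes "2 \<le> q"
  shows "theta q m = (\<Sum>i\<le>m. q ^ i)"
proof -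
  have "int (q ^ (m + 1) - 1) = int q ^ (m + 1) - 1"
    using assms by (simp add: of_nat_diff)
  also have "\<dots> = (int q - 1) * (\<Sum>i<m + 1. int q ^ i)"
    by (rule power_diff_1_eq)
  also have "\<dots> = int ((q - 1) * (\<Sum>i\<le>m. q ^ i))"
    using assms by (simp add: of_nat_diff lessThan_Suc_atMost)
  finally have "q ^ (m + 1) - 1 = (q - 1) * (\<Sum>i\<le>m. q ^ i)"
    by (simp only: of_nat_eq_iff)
  then show ?thesis unfolding theta_def using assms by simp
qed

definition subspaces_of_dim :: "nat \<Rightarrow> ('a::field ^ 'n) set \<Rightarrow> ('a ^ 'n) set set" where
  "subspaces_of_dim m U = {W. vec.subspace W \<and> W \<subseteq> U \<and> vec.dim W = m}"

lemma subspace_eq_span_insert: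
  fixes W Y :: "('a::field ^ 'n) set"
  assumes "vec.subspace W" "vec.subspace Y" "Y \<subseteq> W" "vec.dim W = vec.dim Y + 1"
    and "x \<in> W" "x \<notin> Y"
  shows "W = vec.span (insert x Y)"
proof -
  have "vec.span (insert x Y) \<subseteq> W" using assms(1,3,5) by (simp add: vec.span_minimal)
  moreover have "vec.dim (vec.span (insert x Y)) = vec.dim W"
    using assms(2,4,6) by (simp add: vec.dim_insert vec.span_eq_iff[THEN iffD2])
  ultimately show ?thesis
    using vec.subspace_dim_equal[OF vec.subspace_span assms(1)] by (metis order_refl)
qed

lemma hyperplane_meets_line:
  fixes U W :: "('a::field ^ 'n) set"
  assumes "vec.subspace U" "vec.subspace W" "W \<subseteq> U" "vec.dim U = vec.dim W + 1"
    and "z \<in> U" "z \<notin> W" "e \<in> U"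
  obtains c where "e + c *s z \<in> W"
proof -
  have "U = vec.span (insert z W)" using subspace_eq_span_insert assms(1-6) by blast
  then obtain c where "e - c *s z \<in> vec.span W" using assms(7) vec.span_insert by blast
  then have "e + (- c) *s z \<in> W" using assms(2) by (simp add: vec.span_eq_iff[THEN iffD2])
  then show thesis by (rule that)
qed

lemma dim_Int_hyperplanes:
  fixes U W V :: "('a::field ^ 'n) set"
  assumes "vec.subspace U" "vec.subspace W" "vec.subspace V" "W \<subseteq> U" "V \<subseteq> U"
    and "vec.dim W = d" "vec.dim V = d" "vec.dim U = d + 1" "W \<noteq> V"
  shows "vec.dim (W \<inter> V) + 1 = d"
proof -
  let ?S = "{x + y |x y. x \<in> W \<and> y \<in> V}"
  have S: "vec.subspace ?S" using assms(2,3) by (rule vec.subspace_sums)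
  have "W \<subseteq> ?S" "V \<subseteq> ?S" using assms(2,3) vec.subspace_0 by force+
  moreover have "\<not> V \<subseteq> W"
  proof
    assume "V \<subseteq> W"
    then have "V = W" using vec.subspace_dim_equal[OF assms(3,2)] assms(6,7) by simp
    then show False using assms(9) by simp
  qed
  ultimately have "W \<subset> ?S" by blast
  then have "vec.span W \<subset> vec.span ?S"
    using S assms(2) by (simp add: vec.span_eq_iff[THEN iffD2])
  from vec.dim_psubset[OF this] have "d < vec.dim ?S" using assms(6) by simp
  moreover have "?S \<subseteq> U"
    using assms(4,5) by (auto intro!: vec.subspace_add[OF assms(1)])
  from vec.dim_subset[OF this] have "vec.dim ?S \<le> d + 1" using assms(8) by simp
  ultimately show ?thesis using vec.dim_sums_Int[OF assms(2,3)] assms(6,7) by simp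
qed

lemma hyperplane_trace:
  fixes U U0 W :: "('a::field ^ 'n) set"
  assumes U: "vec.subspace U" "vec.dim U = m + 2"
    and U0: "U0 \<in> subspaces_of_dim (m + 1) U" and W: "W \<in> subspaces_of_dim (m + 1) U" "W \<noteq> U0"
    and e: "e \<in> U" "e \<notin> U0"
  shows "W \<inter> U0 \<in> subspaces_of_dim m U0"
    and "z \<in> U0 \<Longrightarrow> z \<notin> W \<Longrightarrow> \<exists>c. e + c *s z \<in> W"
    and "z \<in> U0 \<Longrightarrow> e + c *s z \<in> W \<Longrightarrow> W = vec.span (insert (e + c *s z) (W \<inter> U0))"
proof -
  have U0': "vec.subspace U0" "U0 \<subseteq> U" "vec.dim U0 = m + 1"
    and W': "vec.subspace W" "W \<subseteq> U" "vec.dim W = m + 1"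
    using U0 W(1) unfolding subspaces_of_dim_def by auto
  have Y: "vec.subspace (W \<inter> U0)" "vec.dim (W \<inter> U0) = m"
    using vec.subspace_inter[OF W'(1) U0'(1)]
      dim_Int_hyperplanes[OF U(1) W'(1) U0'(1) W'(2) U0'(2) W'(3) U0'(3)] U(2) W(2)
    by auto
  then show "W \<inter> U0 \<in> subspaces_of_dim m U0" unfolding subspaces_of_dim_def by simp
  show "\<exists>c. e + c *s z \<in> W" if "z \<in> U0" "z \<notin> W"
    using hyperplane_meets_line[OF U(1) W'(1,2) _ _ that(2) e(1)] that(1) U0'(2) U(2) W'(3)
    by auto
  assume z: "z \<in> U0" and ec: "e + c *s z \<in> W"
  have "c *s z \<in> U0" using U0'(1) z by (rule vec.subspace_scale)
  then have "e + c *s z \<notin> U0" using e(2) U0'(1) vec.subspace_diff by fastforce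
  then show "W = vec.span (insert (e + c *s z) (W \<inter> U0))"
    using subspace_eq_span_insert[OF W'(1) Y(1) _ _ ec] Y W'(3) by auto
qed

lemma card_hyperplanes_le:
  fixes U :: "('a::{field,finite} ^ 'n) set"
  assumes "vec.subspace U" "vec.dim U = m + 1"
  shows "card (subspaces_of_dim m U) \<le> (\<Sum>i\<le>m. CARD('a) ^ i)"
  using assms
proof (induction m arbitrary: U)
  case 0
  have "subspaces_of_dim 0 U \<subseteq> {{0}}"
    unfolding subspaces_of_dim_def using vec.subspace_0 by auto
  then show ?case using card_mono[of "{{0}}"] by simp
next
  case (Suc m)
  let ?H = "subspaces_of_dim (Suc m) U"
  have "vec.span U = U" "m + 1 \<le> vec.dim U"
    using Suc.prems by (simp_all add: vec.span_eq_iff[THEN iffD2])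
  then obtain U0 where U0: "vec.subspace U0" "U0 \<subseteq> U" "vec.dim U0 = m + 1"
    using vec.choose_subspace_of_subspace[of "m + 1" U] by metis
  then have "U0 \<in> ?H" unfolding subspaces_of_dim_def by simp
  have "\<not> U \<subseteq> U0" using vec.dim_subset[of U U0] U0(3) Suc.prems(2) by auto
  then obtain e where e: "e \<in> U" "e \<notin> U0" by blast
  have dim_U: "vec.dim U = m + 2" and U0_H: "U0 \<in> subspaces_of_dim (m + 1) U"
    using Suc.prems(2) \<open>U0 \<in> ?H\<close> by simp_all
  txt \<open>A hyperplane W \<noteq> U0 is determined by its trace W \<inter> U0 together with the scalar c for
    which e + c z lies in W, where the point z \<in> U0 - W is chosen depending on the trace only.\<close>
  define z where "z Y = (SOME z. z \<in> U0 \<and> z \<notin> Y)" for Y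
  define c where "c W = (SOME c. e + c *s z (W \<inter> U0) \<in> W)" for W
  have decomp: "W \<inter> U0 \<in> subspaces_of_dim m U0
      \<and> W = vec.span (insert (e + c W *s z (W \<inter> U0)) (W \<inter> U0))"
    if "W \<in> ?H - {U0}" for W
  proof -
    have W: "W \<in> subspaces_of_dim (m + 1) U" "W \<noteq> U0" using that by auto
    note trace = hyperplane_trace[OF Suc.prems(1) dim_U U0_H W e]
    have "\<not> U0 \<subseteq> W \<inter> U0"
      using trace(1) vec.dim_subset[of U0 "W \<inter> U0"] U0(3) unfolding subspaces_of_dim_def by auto
    then have "\<exists>z. z \<in> U0 \<and> z \<notin> W \<inter> U0" by blast
    then have z: "z (W \<inter> U0) \<in> U0" "z (W \<inter> U0) \<notin> W"
      unfolding z_def by (metis (mono_tags, lifting) someI_ex IntI)+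
    have "e + c W *s z (W \<inter> U0) \<in> W"
      unfolding c_def using trace(2)[OF z] by (rule someI_ex)
    then show ?thesis using trace(1) trace(3)[OF z(1)] by simp
  qed
  have "inj_on (\<lambda>W. (W \<inter> U0, c W)) (?H - {U0})"
    using decomp by (intro inj_onI) (metis prod.inject)
  moreover have "(\<lambda>W. (W \<inter> U0, c W)) ` (?H - {U0}) \<subseteq> subspaces_of_dim m U0 \<times> UNIV"
    using decomp by blast
  ultimately have "card (?H - {U0}) \<le> card (subspaces_of_dim m U0) * CARD('a)"
    using card_inj_on_le[of _ _ "subspaces_of_dim m U0 \<times> (UNIV :: 'a set)"]
    by (simp add: card_cartesian_product)
  also have "\<dots> \<le> (\<Sum>i\<le>m. CARD('a) ^ i) * CARD('a)"
    using Suc.IH U0 by simp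
  finally have "card ?H \<le> 1 + CARD('a) * (\<Sum>i\<le>m. CARD('a) ^ i)"
    using card_Suc_Diff1[OF finite \<open>U0 \<in> ?H\<close>] by (simp add: mult.commute)
  then show ?case
    by (simp add: sum.atMost_Suc_shift sum_distrib_left del: sum.atMost_Suc)
qed

lemma subsingleton_in_pencil:
  fixes S :: "('a::field ^ 'n) set set"
  assumes "k \<le> CARD('n)" "\<forall>\<sigma>\<in>S. aff_space k \<sigma>" "\<forall>\<sigma>1\<in>S. \<forall>\<sigma>2\<in>S. \<sigma>1 = \<sigma>2"
  shows "\<exists>P. aff_space (k - 1) P \<and> S \<subseteq> pencil k P"
proof (cases "S = {}")
  case True
  have "k - 1 \<le> CARD('n)" using assms(1) by simp
  then obtain P :: "('a ^ 'n) set" where "aff_space (k - 1) P"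
    using aff_subspace_exists[OF aff_space_UNIV] by blast
  then show ?thesis using True by blast
next
  case False
  then obtain \<sigma> where \<sigma>: "S = {\<sigma>}" using assms(3) by blast
  then have "aff_space k \<sigma>" using assms(2) by simp
  moreover obtain P where "aff_space (k - 1) P" "P \<subseteq> \<sigma>"
    using aff_subspace_exists[OF calculation, of "k - 1"] by auto
  ultimately show ?thesis using \<sigma> unfolding pencil_def by auto
qed

lemma pairwise_meeting_subset_join:
  fixes S :: "('a::field ^ 'n) set set"
  assumes spaces: "\<forall>\<sigma>\<in>S. aff_space k \<sigma>"
    and meet: "\<forall>\<sigma>1\<in>S. \<forall>\<sigma>2\<in>S. \<sigma>1 \<noteq> \<sigma>2 \<longrightarrow> aff_space (k - 1) (\<sigma>1 \<inter> \<sigma>2)"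
    and not_pencil: "\<not> S \<subseteq> pencil k (\<sigma>1 \<inter> \<sigma>2)"
    and \<sigma>12: "\<sigma>1 \<in> S" "\<sigma>2 \<in> S" "\<sigma>1 \<noteq> \<sigma>2"
    and \<Gamma>: "aff_space m \<Gamma>" "\<sigma>1 \<subseteq> \<Gamma>" "\<sigma>2 \<subseteq> \<Gamma>"
    and "\<sigma> \<in> S"
  shows "\<sigma> \<subseteq> \<Gamma>"
proof -
  define P where "P = \<sigma>1 \<inter> \<sigma>2"
  have P: "aff_space (k - 1) P" unfolding P_def using meet \<sigma>12 by blast
  have outside: "\<tau> \<inter> \<Gamma> = P" if \<tau>: "\<tau> \<in> S" "\<not> \<tau> \<subseteq> \<Gamma>" for \<tau>
  proof -
    have "\<tau> \<noteq> \<sigma>1" "\<tau> \<noteq> \<sigma>2" using \<tau>(2) \<Gamma>(2,3) by auto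
    then have Q: "aff_space (k - 1) (\<tau> \<inter> \<sigma>1)" "aff_space (k - 1) (\<tau> \<inter> \<sigma>2)"
      using meet \<tau>(1) \<sigma>12 by blast+
    have \<tau>_space: "aff_space k \<tau>" using spaces \<tau>(1) by blast
    have "\<tau> \<inter> \<Gamma> = \<tau> \<inter> \<sigma>1" "\<tau> \<inter> \<Gamma> = \<tau> \<inter> \<sigma>2"
      using aff_space_Int_eq_if_not_subset[OF \<tau>_space \<Gamma>(1) \<tau>(2)] Q \<Gamma>(2,3) by blast+
    then have "\<tau> \<inter> \<Gamma> \<subseteq> P" unfolding P_def by blast
    then show ?thesis
      using aff_space_subset_eq[OF _ P _ order_refl] Q(1) \<open>\<tau> \<inter> \<Gamma> = \<tau> \<inter> \<sigma>1\<close> by simp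
  qed
  obtain \<sigma>3 where \<sigma>3: "\<sigma>3 \<in> S" "\<not> P \<subseteq> \<sigma>3"
    using not_pencil spaces unfolding pencil_def P_def by blast
  have "\<sigma>3 \<subseteq> \<Gamma>"
  proof (rule ccontr)
    assume "\<not> \<sigma>3 \<subseteq> \<Gamma>"
    then have "\<sigma>3 \<inter> \<Gamma> = P" by (rule outside[OF \<sigma>3(1)])
    then show False using \<sigma>3(2) by blast
  qed
  show "\<sigma> \<subseteq> \<Gamma>"
  proof (rule ccontr)
    assume "\<not> \<sigma> \<subseteq> \<Gamma>"
    then have "\<sigma> \<inter> \<Gamma> = P" by (rule outside[OF \<open>\<sigma> \<in> S\<close>])
    then have "\<sigma> \<noteq> \<sigma>3" "\<sigma> \<inter> \<sigma>3 \<subseteq> P" using \<open>\<sigma>3 \<subseteq> \<Gamma>\<close> \<open>\<not> \<sigma> \<subseteq> \<Gamma>\<close> by blast+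
    moreover from this(1) have "aff_space (k - 1) (\<sigma> \<inter> \<sigma>3)"
      using meet \<open>\<sigma> \<in> S\<close> \<sigma>3(1) by blast
    ultimately have "\<sigma> \<inter> \<sigma>3 = P" using aff_space_subset_eq[OF _ P _ order_refl] by blast
    then show False using \<sigma>3(2) by blast
  qed
qed

lemma inj_on_aff_dir_if_pairwise_meeting:
  fixes S :: "('a::field ^ 'n) set set"
  assumes "\<forall>\<sigma>\<in>S. aff_space k \<sigma>" "\<forall>\<sigma>1\<in>S. \<forall>\<sigma>2\<in>S. \<sigma>1 \<noteq> \<sigma>2 \<longrightarrow> \<sigma>1 \<inter> \<sigma>2 \<noteq> {}"
  shows "inj_on aff_dir S"
proof (rule inj_onI, rule ccontr)
  fix \<sigma> \<tau> assume \<sigma>\<tau>: "\<sigma> \<in> S" "\<tau> \<in> S" "aff_dir \<sigma> = aff_dir \<tau>" "\<sigma> \<noteq> \<tau>"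
  then have "aff_space k \<sigma>" "aff_space k \<tau>" "\<sigma> \<inter> \<tau> \<noteq> {}" using assms by blast+
  then show False using aff_space_eq_if_parallel \<sigma>\<tau>(3,4) by blast
qed

lemma card_aff_spaces_with_distinct_dirs:
  fixes S :: "('a::{field,finite} ^ 'n) set set"
  assumes \<Gamma>: "aff_space (k + 1) \<Gamma>" and S: "\<forall>\<sigma>\<in>S. aff_space k \<sigma> \<and> \<sigma> \<subseteq> \<Gamma>"
    and inj: "inj_on aff_dir S"
  shows "card S \<le> theta CARD('a) k"
    and "card S = theta CARD('a) k \<Longrightarrow> aff_space k \<tau> \<Longrightarrow> \<tau> \<subseteq> \<Gamma>
      \<Longrightarrow> \<exists>\<sigma>\<in>S. aff_dir \<sigma> = aff_dir \<tau>"
proof -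
  let ?H = "subspaces_of_dim k (aff_dir \<Gamma>)"
  have dir_in: "aff_dir \<tau> \<in> ?H" if "aff_space k \<tau>" "\<tau> \<subseteq> \<Gamma>" for \<tau>
    using aff_dir_mono[OF that(2)] aff_spaceD(1,2)[OF that(1)]
    unfolding subspaces_of_dim_def by blast
  have "card ?H \<le> (\<Sum>i\<le>k. CARD('a) ^ i)"
    using card_hyperplanes_le aff_spaceD(1,2)[OF \<Gamma>] by blast
  then have H: "card ?H \<le> theta CARD('a) k"
    by (simp add: theta_eq_geometric_sum[OF two_le_card_field])
  have sub: "aff_dir ` S \<subseteq> ?H" using dir_in S by blast
  have card_S: "card S = card (aff_dir ` S)" using card_image[OF inj] by simp
  then show "card S \<le> theta CARD('a) k"
    using card_mono[OF finite sub] H by simp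
  assume "card S = theta CARD('a) k" "aff_space k \<tau>" "\<tau> \<subseteq> \<Gamma>"
  then have "aff_dir \<tau> \<in> aff_dir ` S"
    using card_seteq[OF finite sub] card_S H dir_in by simp
  then show "\<exists>\<sigma>\<in>S. aff_dir \<sigma> = aff_dir \<tau>" by auto
qed

theorem mainTheorem2:
  fixes S :: "('a::{field,finite} ^ 'n) set set" and k :: nat
  assumes "1 \<le> k" and "k < CARD('n)"
    and "\<forall>\<sigma>\<in>S. aff_space k \<sigma>"
    and "\<forall>\<sigma>1\<in>S. \<forall>\<sigma>2\<in>S. \<sigma>1 \<noteq> \<sigma>2 \<longrightarrow> aff_space (k - 1) (\<sigma>1 \<inter> \<sigma>2)"
    and "\<not> (\<exists>P. aff_space (k - 1) P \<and> S \<subseteq> pencil k P)"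
  shows "card S \<le> theta CARD('a) k
    \<and> (card S = theta CARD('a) k \<longleftrightarrow>
         (\<exists>\<Gamma>. aff_space (k + 1) \<Gamma> \<and> (\<forall>\<sigma>\<in>S. \<sigma> \<subseteq> \<Gamma>)
            \<and> card S = theta CARD('a) k
            \<and> (\<forall>\<sigma>1\<in>S. \<forall>\<sigma>2\<in>S. \<sigma>1 \<noteq> \<sigma>2 \<longrightarrow> at_infinity \<sigma>1 \<noteq> at_infinity \<sigma>2)
            \<and> (\<forall>\<tau>. aff_space k \<tau> \<and> \<tau> \<subseteq> \<Gamma> \<and> \<tau> \<notin> S \<longrightarrow>
                  (\<exists>\<sigma>\<in>S. at_infinity \<sigma> = at_infinity \<tau>))))
    \<and> (\<exists>\<Gamma>. aff_space (k + 1) \<Gamma> \<and> (\<forall>\<sigma>\<in>S. \<sigma> \<subseteq> \<Gamma>))"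
proof -
  note spaces = assms(3) and meet = assms(4)
  obtain \<sigma>1 \<sigma>2 where \<sigma>12: "\<sigma>1 \<in> S" "\<sigma>2 \<in> S" "\<sigma>1 \<noteq> \<sigma>2"
    using subsingleton_in_pencil[OF less_imp_le[OF assms(2)] spaces] assms(5) by blast
  obtain \<Gamma> where \<Gamma>: "aff_space (k + 1) \<Gamma>" "\<sigma>1 \<subseteq> \<Gamma>" "\<sigma>2 \<subseteq> \<Gamma>"
    using aff_space_join[of k \<sigma>1 \<sigma>2] spaces meet \<sigma>12 assms(1) by blast
  have "\<not> S \<subseteq> pencil k (\<sigma>1 \<inter> \<sigma>2)" using assms(5) meet \<sigma>12 by blast
  then have in_\<Gamma>: "\<forall>\<sigma>\<in>S. \<sigma> \<subseteq> \<Gamma>"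
    using pairwise_meeting_subset_join[OF spaces meet _ \<sigma>12 \<Gamma>] by blast
  have "\<forall>\<sigma>1\<in>S. \<forall>\<sigma>2\<in>S. \<sigma>1 \<noteq> \<sigma>2 \<longrightarrow> \<sigma>1 \<inter> \<sigma>2 \<noteq> {}" using meet aff_spaceD(3) by blast
  then have inj: "inj_on aff_dir S" using inj_on_aff_dir_if_pairwise_meeting spaces by blast
  have "\<forall>\<sigma>\<in>S. aff_space k \<sigma> \<and> \<sigma> \<subseteq> \<Gamma>" using spaces in_\<Gamma> by blast
  note count = card_aff_spaces_with_distinct_dirs[OF \<Gamma>(1) this inj]
  have distinct: "at_infinity \<sigma> \<noteq> at_infinity \<sigma>'"
    if "\<sigma> \<in> S" "\<sigma>' \<in> S" "\<sigma> \<noteq> \<sigma>'" for \<sigma> \<sigma>'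
    using inj_onD[OF inj _ that(1,2)] that(3) at_infinity_eq_iff[of k \<sigma> k \<sigma>'] spaces that(1,2)
    by blast
  have maximal: "\<exists>\<sigma>\<in>S. at_infinity \<sigma> = at_infinity \<tau>"
    if "card S = theta CARD('a) k" "aff_space k \<tau>" "\<tau> \<subseteq> \<Gamma>" for \<tau>
    using count(2)[OF that] at_infinity_eq_iff[of k _ k \<tau>] spaces that(2) by blast
  show ?thesis
    by (intro conjI iffI exI[of _ \<Gamma>] ballI allI impI)
      (use count(1) \<Gamma>(1) in_\<Gamma> distinct maximal in auto)
qed

end
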